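(* Suppose $h_{ij}=h$ for all $i\in\mathcal{M}$, $j\in\mathcal{N}$ (for a constant $h>0$). Then the set of Nash equilibria of the finite game with players $\mathcal{M}$, action set $\mathcal{N}$ and tolled costs $\bar c_i(\mathbf{a})=\sum_{l\in\mathcal{M}_{a_i}(\mathbf{a})}\frac{\sigma^2}{h_{la_i}}\frac{\beta_l}{[1-S_i(\mathbf{a})]^+}-\sum_{l\in\mathcal{M}_{a_i}(\mathbf{a})\setminus\{i\}}\frac{\sigma^2}{h_{la_i}}\frac{\beta_l}{[1-S_i(\mathbf{a})+\beta_i]^+}$ coincides with the set of Nash equilibria of the game with the same players and actions and costs $c_i(\mathbf{a})=\frac{\sigma^2}{h_{ia_i}}\frac{\beta_i}{[1-S_i(\mathbf{a})]^+}$, where $S_i(\mathbf{a})=\sum_{k\in\mathcal{M}_{a_i}(\mathbf{a})}\beta_k$.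
   Context: Uplink cellular model: mobiles $\mathcal{M}=\{1,\dots,M\}$, BSs $\mathcal{N}=\{1,\dots,N\}$, power gains $h_{ij}>0$, noise power $\sigma^2>0$, target SINRs $\gamma_i>0$, $\beta_i=\gamma_i/(1+\gamma_i)$. Association profile $\mathbf{a}\in\mathcal{N}^M$, $\mathcal{M}_j(\mathbf{a})=\{l: a_l=j\}$, $[x]^+=\max(x,0)$, positive$/0=+\infty$, and $\bar c_i(\mathbf{a})=+\infty$ whenever its first sum is infinite. $(b,\mathbf{a}_{-i})$ replaces $a_i$ by $b$. For a game with costs $d_i$, $\mathbf{a}$ is a Nash equilibrium if $a_i\in\arg\min_{b\in\mathcal{N}}d_i(b,\mathbf{a}_{-i})$ for all $i$. Standing assumption: there exists at least one feasible association, i.e. some $\mathbf{a}$ with $\sum_{l\in\mathcal{M}_j(\mathbf{a})}\beta_l<1$ for all $j$. *)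

theory Defs
  imports "HOL-Analysis.Analysis" "HOL-Library.Extended_Real"
begin

text \<open>Mobiles are the elements of a finite type 'm, base stations those of a finite type 'n.
  An association profile is a function a :: 'm => 'n.  Costs take values in ereal.\<close>

definition cell :: "('m \<Rightarrow> 'n) \<Rightarrow> 'n \<Rightarrow> 'm set" where
  "cell a j = {l. a l = j}"

definition load :: "('m \<Rightarrow> real) \<Rightarrow> ('m \<Rightarrow> 'n) \<Rightarrow> 'm \<Rightarrow> real" where
  "load \<beta> a i = (\<Sum>k\<in>cell a (a i). \<beta> k)"

definition pdiv :: "real \<Rightarrow> real \<Rightarrow> ereal" where
  "pdiv x y = (if max y 0 = 0 then PInfty else ereal (x / max y 0))"

definition cost_c :: "real \<Rightarrow> ('m \<Rightarrow> 'n \<Rightarrow> real) \<Rightarrow> ('m \<Rightarrow> real) \<Rightarrow> ('m \<Rightarrow> 'n) \<Rightarrow> 'm \<Rightarrow> ereal" where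
  "cost_c sig2 h \<beta> a i = pdiv (sig2 / h i (a i) * \<beta> i) (1 - load \<beta> a i)"

definition cost_tolled :: "real \<Rightarrow> ('m \<Rightarrow> 'n \<Rightarrow> real) \<Rightarrow> ('m \<Rightarrow> real) \<Rightarrow> ('m \<Rightarrow> 'n) \<Rightarrow> 'm \<Rightarrow> ereal" where
  "cost_tolled sig2 h \<beta> a i =
     (let F = (\<Sum>l\<in>cell a (a i). pdiv (sig2 / h l (a i) * \<beta> l) (1 - load \<beta> a i))
      in if F = PInfty then PInfty
         else F - (\<Sum>l\<in>cell a (a i) - {i}. pdiv (sig2 / h l (a i) * \<beta> l) (1 - load \<beta> a i + \<beta> i)))"

definition nash_eq :: "(('m \<Rightarrow> 'n) \<Rightarrow> 'm \<Rightarrow> ereal) \<Rightarrow> ('m \<Rightarrow> 'n) \<Rightarrow> bool" where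
  "nash_eq d a \<longleftrightarrow> (\<forall>i. \<forall>b. d a i \<le> d (a(i := b)) i)"

end

theory Submission
  imports Defs
begin

text \<open>With equal gains, player i's plain cost is K \<beta>_i / (1 - S) and, after the cell sums
  telescope, its tolled cost is K \<beta>_i / ((1 - S)(1 - S + \<beta>_i)), where S is the load of i's
  cell and K = sigma^2/h; both are +\<infinity> once S \<ge> 1.  Each is a strictly increasing function
  of S on S < 1, so for every unilateral deviation the two costs are compared in the same way,
  and the two games have the same Nash equilibria.\<close>

definition capped :: "(real \<Rightarrow> real) \<Rightarrow> real \<Rightarrow> ereal" where
  "capped f S = (if S < 1 then ereal (f S) else \<infinity>)"

lemma capped_le_capped_iff:
  assumes "strict_mono_on {..<1} f"
  shows "capped f S \<le> capped f T \<longleftrightarrow> 1 \<le> T \<or> S \<le> T"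
proof (cases "S < 1 \<and> T < 1")
  case True
  then have "f S \<le> f T \<longleftrightarrow> S \<le> T"
    using assms unfolding strict_mono_on_def by (metis lessThan_iff not_le order_le_less)
  then show ?thesis using True by (simp add: capped_def)
qed (auto simp: capped_def)

lemma strict_mono_on_divide_antitone:
  fixes c :: real and g :: "real \<Rightarrow> real"
  assumes "c > 0" and "\<And>S T. S < T \<Longrightarrow> T < 1 \<Longrightarrow> 0 < g T \<and> g T < g S"
  shows "strict_mono_on {..<1} (\<lambda>S. c / g S)"
proof (rule strict_mono_onI)
  fix S T :: real
  assume "S \<in> {..<1}" "T \<in> {..<1}" "S < T"
  then have "0 < g T" "g T < g S" using assms(2) by auto
  then show "c / g S < c / g T" using \<open>c > 0\<close> by (simp add: divide_strict_left_mono)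
qed

lemma load_eq_add_others:
  "load \<beta> a i = \<beta> i + (\<Sum>l\<in>cell a (a i) - {i}. \<beta> l)" if "finite (cell a (a i))"
proof -
  have "i \<in> cell a (a i)" by (simp add: cell_def)
  then show ?thesis using that unfolding load_def by (simp add: sum.remove)
qed

lemma pdiv_pos: "y > 0 \<Longrightarrow> pdiv x y = ereal (x / y)"
  by (simp add: pdiv_def)

lemma pdiv_nonpos: "y \<le> 0 \<Longrightarrow> pdiv x y = \<infinity>"
  by (simp add: pdiv_def)

lemma cost_c_const_gain:
  assumes "\<And>l j. h l j = hc"
  shows "cost_c sig2 h \<beta> a i = capped (\<lambda>S. sig2 / hc * \<beta> i / (1 - S)) (load \<beta> a i)"
  using assms by (simp add: cost_c_def capped_def pdiv_pos pdiv_nonpos)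

lemma cost_tolled_const_gain:
  fixes a :: "'m::finite \<Rightarrow> 'n"
  assumes h: "\<And>l j. h l j = hc" and "\<beta> i \<ge> 0"
  shows "cost_tolled sig2 h \<beta> a i =
    capped (\<lambda>S. sig2 / hc * \<beta> i / ((1 - S) * (1 - S + \<beta> i))) (load \<beta> a i)"
proof -
  define K where "K = sig2 / hc"
  define S where "S = load \<beta> a i"
  define C where "C = cell a (a i)"
  have "i \<in> C" by (simp add: C_def cell_def)
  show ?thesis
  proof (cases "S < 1")
    case False
    then have "(\<Sum>l\<in>C. pdiv (sig2 / h l (a i) * \<beta> l) (1 - S)) = (\<Sum>l\<in>C. \<infinity>)"
      by (simp add: pdiv_nonpos)
    also have "\<dots> = \<infinity>" using \<open>i \<in> C\<close> by (auto simp: sum_Pinfty)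
    finally show ?thesis
      using False by (simp add: cost_tolled_def capped_def Let_def S_def C_def)
  next
    case True
    have "1 - S + \<beta> i > 0" using True \<open>\<beta> i \<ge> 0\<close> by simp
    have served: "(\<Sum>l\<in>C. pdiv (sig2 / h l (a i) * \<beta> l) (1 - S)) = ereal (K * S / (1 - S))"
      using True h
      by (simp add: pdiv_pos K_def S_def C_def load_def sum_divide_distrib[symmetric]
          sum_distrib_left)
    have others: "(\<Sum>l\<in>C - {i}. pdiv (sig2 / h l (a i) * \<beta> l) (1 - S + \<beta> i))
        = ereal (K * (S - \<beta> i) / (1 - S + \<beta> i))"
      using \<open>1 - S + \<beta> i > 0\<close> h load_eq_add_others[of a i \<beta>]
      by (simp add: pdiv_pos K_def S_def C_def sum_divide_distrib[symmetric] sum_distrib_left)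
    have "K * S / (1 - S) - K * (S - \<beta> i) / (1 - S + \<beta> i)
        = K * \<beta> i / ((1 - S) * (1 - S + \<beta> i))"
      using True \<open>1 - S + \<beta> i > 0\<close> by (simp add: field_simps)
    then show ?thesis
      using True served others
      by (simp add: cost_tolled_def capped_def Let_def K_def S_def[symmetric] C_def[symmetric])
  qed
qed

lemma nash_eq_cong_deviations:
  assumes "\<And>a i b. d a i \<le> d (a(i := b)) i \<longleftrightarrow> e a i \<le> e (a(i := b)) i"
  shows "nash_eq d = nash_eq e"
  using assms by (simp add: nash_eq_def fun_eq_iff)

theorem proposition16:
  fixes sig2 :: real and hc :: real
    and h :: "'m::finite \<Rightarrow> 'n::finite \<Rightarrow> real"
    and \<gamma> \<beta> :: "'m \<Rightarrow> real"
  assumes sig2_pos: "sig2 > 0"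
    and gamma_pos: "\<And>i. \<gamma> i > 0"
    and beta_def: "\<And>i. \<beta> i = \<gamma> i / (1 + \<gamma> i)"
    and hc_pos: "hc > 0"
    and h_const: "\<And>i j. h i j = hc"
    and feasible: "\<exists>a :: 'm \<Rightarrow> 'n. \<forall>j. (\<Sum>l\<in>cell a j. \<beta> l) < 1"
  shows "{a. nash_eq (cost_tolled sig2 h \<beta>) a} = {a. nash_eq (cost_c sig2 h \<beta>) a}"
proof -
  have \<beta>_pos: "\<beta> i > 0" for i using gamma_pos[of i] by (simp add: beta_def add_pos_pos)
  have K_\<beta>_pos: "sig2 / hc * \<beta> i > 0" for i using sig2_pos hc_pos \<beta>_pos[of i] by simp
  have mono_c: "strict_mono_on {..<1} (\<lambda>S. sig2 / hc * \<beta> i / (1 - S))" for i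
    using K_\<beta>_pos by (intro strict_mono_on_divide_antitone) auto
  have mono_tolled:
    "strict_mono_on {..<1} (\<lambda>S. sig2 / hc * \<beta> i / ((1 - S) * (1 - S + \<beta> i)))" for i
    using K_\<beta>_pos \<beta>_pos[of i]
    by (intro strict_mono_on_divide_antitone) (auto intro: mult_strict_mono)
  have "nash_eq (cost_tolled sig2 h \<beta>) = nash_eq (cost_c sig2 h \<beta>)"
    using h_const \<beta>_pos
    by (intro nash_eq_cong_deviations) (simp only: cost_tolled_const_gain cost_c_const_gain
        capped_le_capped_iff[OF mono_c] capped_le_capped_iff[OF mono_tolled] less_imp_le)
  then show ?thesis by simp
qed

end
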